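(* For every integer $k\ge2$, the infimum $\alpha_*=\inf_{x\in\Delta^{d-1}}F^k(x)$ is attained at some point of $\Delta^{d-1}$, and $1\le\alpha_*\le 12\cdot3^{k-1}-3$.
   Context: Fix $k\ge2$ and $d=4\cdot3^{k-1}$. $\Delta^{d-1}=\{x=(x_1,\dots,x_d)\in\mathbb{R}^d: x_i>0,\ \sum_i x_i=1\}$. For $j=1,2,3,4$, $I_j=\{(j-1)3^{k-1}+1,\dots,j\cdot3^{k-1}\}$ and $\Sigma_j(x)=\sum_{l\in I_j}x_l$. Let $\sigma(t)=(1-t)/t$ for $t\in(0,1)$. For $i\in\{1,\dots,d\}$ let $j(i)=1$ if $i\equiv0\pmod4$, $j(i)=4$ if $i\equiv1$, $j(i)=3$ if $i\equiv2$, $j(i)=2$ if $i\equiv3\pmod 4$, and set $f_i(x)=\sigma(\Sigma_{j(i)}(x))\,\sigma(x_i)$. Define $F^k(x)=\max_{1\le i\le d}f_i(x)$ on $\Delta^{d-1}$. *)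

theory Defs
  imports "HOL-Analysis.Analysis"
begin

text \<open>Points of R^d are represented as functions nat => real, coordinates indexed by 1..d;
  coordinates outside 1..d are required to be 0 so that the simplex is a faithful copy.\<close>

definition dim_d :: "nat \<Rightarrow> nat" where
  "dim_d k = 4 * 3 ^ (k - 1)"

definition open_simplex :: "nat \<Rightarrow> (nat \<Rightarrow> real) set" where
  "open_simplex d = {x. (\<forall>i\<in>{1..d}. x i > 0) \<and> (\<forall>i. i \<notin> {1..d} \<longrightarrow> x i = 0)
                        \<and> (\<Sum>i=1..d. x i) = 1}"

definition block :: "nat \<Rightarrow> nat \<Rightarrow> nat set" where
  "block k j = {(j - 1) * 3 ^ (k - 1) + 1 .. j * 3 ^ (k - 1)}"

definition blocksum :: "nat \<Rightarrow> nat \<Rightarrow> (nat \<Rightarrow> real) \<Rightarrow> real" where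
  "blocksum k j x = (\<Sum>l\<in>block k j. x l)"

definition sigma :: "real \<Rightarrow> real" where
  "sigma t = (1 - t) / t"

definition jidx :: "nat \<Rightarrow> nat" where
  "jidx i = (if i mod 4 = 0 then 1 else if i mod 4 = 1 then 4 else if i mod 4 = 2 then 3 else 2)"

definition fcomp :: "nat \<Rightarrow> nat \<Rightarrow> (nat \<Rightarrow> real) \<Rightarrow> real" where
  "fcomp k i x = sigma (blocksum k (jidx i) x) * sigma (x i)"

definition Fk :: "nat \<Rightarrow> (nat \<Rightarrow> real) \<Rightarrow> real" where
  "Fk k x = Max ((\<lambda>i. fcomp k i x) ` {1..dim_d k})"

end

theory Submission
  imports Defs
begin

(*
  Suppose f_l(x) \<le> C for all l, where C \<ge> 1. For a coordinate i let j = j(i), s = \<Sigma>_j(x), and pick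
  an index i' outside the j-th block with j(i') \<noteq> j; then \<Sigma>_{j(i')}(x) and x_{i'} are both at most 1 - s.
  As \<sigma> is decreasing, \<sigma>(1 - s)^2 \<le> f_{i'}(x) \<le> C, so \<sigma>(1 - s) \<le> C, and since \<sigma>(1 - s) \<sigma>(s) = 1 this gives
  \<sigma>(x_i) \<le> \<sigma>(1 - s) f_i(x) \<le> C^2, i.e. x_i \<ge> 1/(1 + C^2). Hence the sublevel set of F^k below its
  value C = 12 \<cdot> 3^(k-1) - 3 at the barycenter lies in a compact part of the open simplex, where the
  continuous F^k attains its minimum. The lower bound 1 comes from f_1 alone: \<sigma>(a) \<sigma>(b) \<ge> 1
  whenever a + b \<le> 1.
*)

lemma compact_PiE_UNIV:
  fixes S :: "'i \<Rightarrow> 'b::topological_space set"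
  assumes "\<And>i. compact (S i)"
  shows "compact (PiE UNIV S)"
  using assms compactin_PiE[of "\<lambda>i. euclidean" UNIV S] by (simp add: euclidean_product_topology)

lemma continuous_on_Max:
  fixes f :: "'i \<Rightarrow> 'a::topological_space \<Rightarrow> 'b::linorder_topology"
  assumes "finite I" "I \<noteq> {}" "\<And>i. i \<in> I \<Longrightarrow> continuous_on S (f i)"
  shows "continuous_on S (\<lambda>x. Max ((\<lambda>i. f i x) ` I))"
  using assms
proof (induction I rule: finite_ne_induct)
  case (insert a B)
  then have "continuous_on S (\<lambda>x. max (f a x) (Max ((\<lambda>i. f i x) ` B)))"
    by (intro continuous_on_max) auto
  then show ?case using insert by simp
qed simp

lemma INF_attained_of_compact_sublevel:
  fixes f :: "'a::topological_space \<Rightarrow> real"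
  assumes "compact K" "K \<subseteq> P" "continuous_on K f" "u \<in> K"
    and sublevel: "\<And>y. y \<in> P \<Longrightarrow> f y \<le> f u \<Longrightarrow> y \<in> K"
  obtains x where "x \<in> P" "f x = (INF y\<in>P. f y)" "f x \<le> f u"
proof -
  obtain x where x: "x \<in> K" "\<And>y. y \<in> K \<Longrightarrow> f x \<le> f y"
    using continuous_attains_inf[OF assms(1) _ assms(3)] \<open>u \<in> K\<close> by blast
  have min: "f x \<le> f y" if "y \<in> P" for y
  proof (cases "f y \<le> f u")
    case True
    then show ?thesis using x sublevel that by blast
  next
    case False
    then show ?thesis using x(2)[OF \<open>u \<in> K\<close>] by linarith
  qed
  have "(INF y\<in>P. f y) = f x"
    using x(1) \<open>K \<subseteq> P\<close> min by (intro cInf_eq_minimum) auto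
  then show ?thesis using that x \<open>K \<subseteq> P\<close> \<open>u \<in> K\<close> by auto
qed

lemma sigma_antimono: "0 < a \<Longrightarrow> a \<le> b \<Longrightarrow> sigma b \<le> sigma a"
  unfolding sigma_def by (simp add: divide_simps algebra_simps)

lemma sigma_one_minus_mult_sigma: "0 < t \<Longrightarrow> t < 1 \<Longrightarrow> sigma (1 - t) * sigma t = 1"
  unfolding sigma_def by simp

lemma sigma_le_imp_ge: "0 < t \<Longrightarrow> 0 \<le> c \<Longrightarrow> sigma t \<le> c \<Longrightarrow> 1 / (1 + c) \<le> t"
  unfolding sigma_def by (simp add: field_simps)

lemma one_le_sigma_mult: "0 < a \<Longrightarrow> 0 < b \<Longrightarrow> a + b \<le> 1 \<Longrightarrow> 1 \<le> sigma a * sigma b"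
  unfolding sigma_def by (simp add: field_simps)

lemma sigma_le_square:
  fixes a b s y C :: real
  assumes pos: "0 < a" "0 < b" "0 < s" "0 < y"
    and disj: "a + s \<le> 1" "b + s \<le> 1"
    and bound: "sigma a * sigma b \<le> C" "sigma s * sigma y \<le> C" and "1 \<le> C"
  shows "sigma y \<le> C\<^sup>2"
proof -
  define t where "t = sigma (1 - s)"
  have s1: "s < 1" using pos disj by linarith
  have t_pos: "0 < t" using pos s1 by (simp add: t_def sigma_def)
  have "t\<^sup>2 \<le> sigma a * sigma b"
    unfolding power2_eq_square t_def using pos disj s1
    by (intro mult_mono sigma_antimono) (auto simp: sigma_def)
  also have "\<dots> \<le> C" by (fact bound)
  also have "\<dots> \<le> C\<^sup>2" using \<open>1 \<le> C\<close> by (simp add: power2_eq_square)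
  finally have "t\<^sup>2 \<le> C\<^sup>2" .
  moreover have "0 \<le> C" using \<open>1 \<le> C\<close> by linarith
  ultimately have "t \<le> C" by (rule power2_le_imp_le)
  have "sigma y = t * (sigma s * sigma y)"
    using sigma_one_minus_mult_sigma[OF pos(3) s1] by (simp add: t_def)
  also have "\<dots> \<le> t * C" using bound(2) t_pos by (intro mult_left_mono) auto
  also have "\<dots> \<le> C * C" using \<open>t \<le> C\<close> \<open>0 \<le> C\<close> by (rule mult_right_mono)
  finally show ?thesis by (simp add: power2_eq_square)
qed

definition truncated_simplex :: "nat \<Rightarrow> real \<Rightarrow> (nat \<Rightarrow> real) set" where
  "truncated_simplex d \<delta> = {x. (\<forall>i\<in>{1..d}. \<delta> \<le> x i) \<and> (\<forall>i. i \<notin> {1..d} \<longrightarrow> x i = 0)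
                              \<and> (\<Sum>i=1..d. x i) = 1}"

lemma closed_truncated_simplex: "closed (truncated_simplex d \<delta>)"
  unfolding truncated_simplex_def Ball_def
  by (intro closed_Collect_conj closed_Collect_all closed_Collect_imp closed_Collect_le closed_Collect_eq)
     (auto intro!: continuous_intros continuous_on_product_coordinates)

lemma truncated_simplex_subset_cube:
  assumes "0 \<le> \<delta>" shows "truncated_simplex d \<delta> \<subseteq> PiE UNIV (\<lambda>_. {0..1})"
proof
  fix x assume x: "x \<in> truncated_simplex d \<delta>"
  have nonneg: "0 \<le> x l" if "l \<in> {1..d}" for l
  proof -
    have "\<delta> \<le> x l" using x that by (simp add: truncated_simplex_def)
    then show ?thesis using assms by linarith
  qed
  have "x i \<in> {0..1}" for i
  proof (cases "i \<in> {1..d}")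
    case True
    have "x i = (\<Sum>l\<in>{i}. x l)" by simp
    also have "\<dots> \<le> (\<Sum>l=1..d. x l)" using True nonneg by (intro sum_mono2) auto
    also have "\<dots> = 1" using x by (simp add: truncated_simplex_def)
    finally show ?thesis using nonneg[OF True] by simp
  next
    case False
    then show ?thesis using x by (simp add: truncated_simplex_def)
  qed
  then show "x \<in> PiE UNIV (\<lambda>_. {0..1})" by (simp add: PiE_UNIV_domain)
qed

lemma compact_truncated_simplex:
  assumes "0 \<le> \<delta>" shows "compact (truncated_simplex d \<delta>)"
  using compact_Int_closed[OF compact_PiE_UNIV closed_truncated_simplex]
        truncated_simplex_subset_cube[OF assms]
  by (metis compact_Icc inf.absorb_iff2)

lemma truncated_simplex_subset_open_simplex:
  "0 < \<delta> \<Longrightarrow> truncated_simplex d \<delta> \<subseteq> open_simplex d"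
  unfolding truncated_simplex_def open_simplex_def by force

lemma open_simplex_sum_le_1:
  assumes "x \<in> open_simplex d" "A \<subseteq> {1..d}"
  shows "sum x A \<le> 1"
proof -
  have "sum x A \<le> sum x {1..d}"
    using assms by (intro sum_mono2) (auto simp: open_simplex_def less_imp_le)
  then show ?thesis using assms(1) by (simp add: open_simplex_def)
qed

lemma open_simplex_sum_disjoint_le_1:
  assumes "x \<in> open_simplex d" "A \<subseteq> {1..d}" "B \<subseteq> {1..d}" "A \<inter> B = {}"
  shows "sum x A + sum x B \<le> 1"
proof -
  have "finite A" "finite B" using assms(2,3) finite_subset by blast+
  then have "sum x A + sum x B = sum x (A \<union> B)" using assms(4) by (simp add: sum.union_disjoint)
  also have "\<dots> \<le> 1" using assms by (intro open_simplex_sum_le_1) auto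
  finally show ?thesis .
qed

definition simplex_barycenter :: "nat \<Rightarrow> nat \<Rightarrow> real" where
  "simplex_barycenter d = (\<lambda>i. if i \<in> {1..d} then 1 / real d else 0)"

lemma simplex_barycenter_in_truncated_simplex:
  "0 < d \<Longrightarrow> \<delta> \<le> 1 / real d \<Longrightarrow> simplex_barycenter d \<in> truncated_simplex d \<delta>"
  unfolding simplex_barycenter_def truncated_simplex_def by simp

lemma jidx_range: "jidx i \<in> {1..4}"
  unfolding jidx_def by auto

lemma block_subset: "j \<in> {1..4} \<Longrightarrow> block k j \<subseteq> {1..dim_d k}"
  unfolding block_def dim_d_def by (auto intro: order_trans[OF _ mult_right_mono])

lemma card_block: "1 \<le> j \<Longrightarrow> card (block k j) = 3 ^ (k - 1)"
  by (cases j) (auto simp: block_def)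

lemma block_disjoint: "1 \<le> j \<Longrightarrow> j < j' \<Longrightarrow> block k j \<inter> block k j' = {}"
proof -
  assume "1 \<le> j" "j < j'"
  then have "j * 3 ^ (k - 1) \<le> (j' - 1) * 3 ^ (k - 1)" by (intro mult_right_mono) auto
  then show ?thesis unfolding block_def disjoint_iff atLeastAtMost_iff by linarith
qed

lemma exists_index_off_block:
  assumes "j \<in> {1..4}"
  shows "\<exists>i\<in>{1..dim_d k}. i \<notin> block k j \<and> jidx i \<noteq> j"
proof -
  define m :: nat where "m = 3 ^ (k - 1)"
  have "1 \<le> m" by (simp add: m_def)
  have d: "dim_d k = 4 * m" and bl: "block k j = {(j - 1) * m + 1 .. j * m}"
    by (simp_all add: dim_d_def block_def m_def)
  consider "j = 1" | "j = 2 \<or> j = 3" | "j = 4" using assms by force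
  then show ?thesis
  proof cases
    case 1
    have "4 * m - 1 = 4 * (m - 1) + 3" using \<open>1 \<le> m\<close> by simp
    then have "jidx (4 * m - 1) = 2" by (simp add: jidx_def)
    then show ?thesis using 1 d bl \<open>1 \<le> m\<close> by (intro bexI[of _ "4 * m - 1"]) auto
  next
    case 2
    then show ?thesis using d bl \<open>1 \<le> m\<close> by (intro bexI[of _ 1]) (auto simp: jidx_def)
  next
    case 3
    then show ?thesis using d bl \<open>1 \<le> m\<close> by (intro bexI[of _ 2]) (auto simp: jidx_def)
  qed
qed

lemma blocksum_pos:
  assumes "x \<in> open_simplex (dim_d k)" "j \<in> {1..4}"
  shows "0 < blocksum k j x"
proof -
  have "block k j \<noteq> {}" using card_block[of j k] assms(2) by force
  moreover have "0 < x l" if "l \<in> block k j" for l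
    using assms block_subset[OF assms(2)] that by (auto simp: open_simplex_def)
  ultimately show ?thesis unfolding blocksum_def by (intro sum_pos) (auto simp: block_def)
qed

lemma fcomp_le_Fk: "i \<in> {1..dim_d k} \<Longrightarrow> fcomp k i x \<le> Fk k x"
  unfolding Fk_def by (intro Max_ge) auto

lemma one_le_Fk:
  assumes x: "x \<in> open_simplex (dim_d k)" shows "1 \<le> Fk k x"
proof -
  have one: "1 \<in> {1..dim_d k}" by (simp add: dim_d_def)
  have "1 \<notin> block k 4" by (simp add: block_def)
  then have "blocksum k 4 x + x 1 \<le> 1"
    using open_simplex_sum_disjoint_le_1[OF x block_subset[of 4 k], of "{1}"] one
    unfolding blocksum_def by auto
  then have "1 \<le> fcomp k 1 x"
    using blocksum_pos[OF x, of 4] x one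
    unfolding fcomp_def jidx_def by (simp add: one_le_sigma_mult open_simplex_def)
  also have "\<dots> \<le> Fk k x" by (rule fcomp_le_Fk[OF one])
  finally show ?thesis .
qed

lemma Fk_simplex_barycenter: "Fk k (simplex_barycenter (dim_d k)) = 12 * 3 ^ (k - 1) - 3"
proof -
  define m :: nat where "m = 3 ^ (k - 1)"
  have "0 < m" by (simp add: m_def)
  have d: "dim_d k = 4 * m" by (simp add: dim_d_def m_def)
  have "fcomp k i (simplex_barycenter (dim_d k)) = 12 * 3 ^ (k - 1) - 3"
    if i: "i \<in> {1..dim_d k}" for i
  proof -
    have j: "jidx i \<in> {1..4}" by (rule jidx_range)
    have "blocksum k (jidx i) (simplex_barycenter (dim_d k)) = real m * (1 / real (4 * m))"
      using block_subset[OF j, of k] card_block[of "jidx i" k] j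
      by (simp add: blocksum_def simplex_barycenter_def d m_def subset_eq)
    also have "\<dots> = 1 / 4" using \<open>0 < m\<close> by simp
    finally have "blocksum k (jidx i) (simplex_barycenter (dim_d k)) = 1 / 4" .
    moreover have "simplex_barycenter (dim_d k) i = 1 / real (4 * m)"
      using i by (simp add: simplex_barycenter_def d)
    ultimately have "fcomp k i (simplex_barycenter (dim_d k)) = sigma (1 / 4) * sigma (1 / real (4 * m))"
      by (simp only: fcomp_def)
    also have "\<dots> = 3 * (4 * real m - 1)"
      using \<open>0 < m\<close> by (simp add: sigma_def field_simps)
    finally show ?thesis by (simp add: m_def)
  qed
  moreover have "{1..dim_d k} \<noteq> {}" by (simp add: dim_d_def)
  ultimately have "(\<lambda>i. fcomp k i (simplex_barycenter (dim_d k))) ` {1..dim_d k} = {12 * 3 ^ (k - 1) - 3}"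
    by auto
  then show ?thesis unfolding Fk_def by simp
qed

lemma continuous_on_Fk: "continuous_on (open_simplex (dim_d k)) (Fk k)"
  unfolding Fk_def
proof (rule continuous_on_Max)
  fix i assume i: "i \<in> {1..dim_d k}"
  have j: "jidx i \<in> {1..4}" by (rule jidx_range)
  have coord: "continuous_on (open_simplex (dim_d k)) (\<lambda>x. x l)" for l
    by (rule continuous_on_subset[OF continuous_on_product_coordinates]) simp
  have nonzero: "blocksum k (jidx i) x \<noteq> 0 \<and> x i \<noteq> 0" if "x \<in> open_simplex (dim_d k)" for x
    using blocksum_pos[OF that j] that i unfolding open_simplex_def by force
  show "continuous_on (open_simplex (dim_d k)) (fcomp k i)"
    unfolding fcomp_def sigma_def
    using nonzero unfolding blocksum_def by (intro continuous_intros coord) auto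
qed (auto simp: dim_d_def)

lemma sigma_coordinate_le_square:
  assumes x: "x \<in> open_simplex (dim_d k)" and "1 \<le> C"
    and bound: "\<And>i. i \<in> {1..dim_d k} \<Longrightarrow> fcomp k i x \<le> C"
    and i: "i \<in> {1..dim_d k}"
  shows "sigma (x i) \<le> C\<^sup>2"
proof -
  define j where "j = jidx i"
  have j: "j \<in> {1..4}" unfolding j_def by (rule jidx_range)
  obtain i' where i': "i' \<in> {1..dim_d k}" "i' \<notin> block k j" "jidx i' \<noteq> j"
    using exists_index_off_block[OF j] by blast
  have j': "jidx i' \<in> {1..4}" by (rule jidx_range)
  have pos: "0 < x l" if "l \<in> {1..dim_d k}" for l
    using x that by (simp add: open_simplex_def)
  have "block k (jidx i') \<inter> block k j = {}"
    using block_disjoint[of "jidx i'" j k] block_disjoint[of j "jidx i'" k] i'(3) j j'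
    by (cases "jidx i' < j") (auto simp: Int_commute)
  then have disj_blocks: "blocksum k (jidx i') x + blocksum k j x \<le> 1"
    unfolding blocksum_def
    by (intro open_simplex_sum_disjoint_le_1[OF x] block_subset j j')
  have disj_coord: "x i' + blocksum k j x \<le> 1"
    using open_simplex_sum_disjoint_le_1[OF x _ block_subset[OF j], of "{i'}"] i'
    unfolding blocksum_def by auto
  have "sigma (blocksum k (jidx i') x) * sigma (x i') \<le> C"
    using bound[OF i'(1)] by (simp only: fcomp_def)
  moreover have "sigma (blocksum k j x) * sigma (x i) \<le> C"
    using bound[OF i] by (simp only: fcomp_def j_def)
  ultimately show ?thesis
    using \<open>1 \<le> C\<close>
    by (rule sigma_le_square[OF blocksum_pos[OF x j'] pos[OF i'(1)] blocksum_pos[OF x j] pos[OF i]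
        disj_blocks disj_coord])
qed

lemma Fk_sublevel_subset_truncated_simplex:
  assumes x: "x \<in> open_simplex (dim_d k)" and "1 \<le> C" "Fk k x \<le> C"
  shows "x \<in> truncated_simplex (dim_d k) (1 / (1 + C\<^sup>2))"
proof -
  have bound: "fcomp k l x \<le> C" if "l \<in> {1..dim_d k}" for l
    using fcomp_le_Fk[OF that, of x] \<open>Fk k x \<le> C\<close> by linarith
  have "1 / (1 + C\<^sup>2) \<le> x i" if i: "i \<in> {1..dim_d k}" for i
  proof (rule sigma_le_imp_ge)
    show "0 < x i" using x i by (simp add: open_simplex_def)
    show "sigma (x i) \<le> C\<^sup>2" by (rule sigma_coordinate_le_square[OF x \<open>1 \<le> C\<close> bound i])
  qed simp
  then show ?thesis using x by (simp add: open_simplex_def truncated_simplex_def)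
qed

theorem mainTheorem5:
  fixes k :: nat
  assumes "k \<ge> 2"
  shows "\<exists>x\<in>open_simplex (dim_d k).
           Fk k x = (INF y\<in>open_simplex (dim_d k). Fk k y)
         \<and> 1 \<le> (INF y\<in>open_simplex (dim_d k). Fk k y)
         \<and> (INF y\<in>open_simplex (dim_d k). Fk k y) \<le> 12 * 3 ^ (k - 1) - 3"
proof -
  define C :: real where "C = 12 * 3 ^ (k - 1) - 3"
  define K where "K = truncated_simplex (dim_d k) (1 / (1 + C\<^sup>2))"
  define m :: real where "m = 3 ^ (k - 1)"
  have "1 \<le> m" by (simp add: m_def)
  have C: "C = 12 * m - 3" and d: "real (dim_d k) = 4 * m"
    by (simp_all add: C_def m_def dim_d_def)
  have "1 \<le> C" using \<open>1 \<le> m\<close> C by linarith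
  have "C \<le> C\<^sup>2" using \<open>1 \<le> C\<close> by (simp add: power2_eq_square)
  then have "real (dim_d k) \<le> 1 + C\<^sup>2" using d C \<open>1 \<le> m\<close> by linarith
  then have bary: "simplex_barycenter (dim_d k) \<in> K"
    unfolding K_def by (intro simplex_barycenter_in_truncated_simplex) (auto simp: dim_d_def frac_le)
  have KP: "K \<subseteq> open_simplex (dim_d k)"
    unfolding K_def by (intro truncated_simplex_subset_open_simplex) (simp add: add_pos_nonneg)
  have "compact K" unfolding K_def by (simp add: compact_truncated_simplex)
  moreover have "continuous_on K (Fk k)" using continuous_on_Fk KP by (rule continuous_on_subset)
  moreover have "Fk k (simplex_barycenter (dim_d k)) = C"
    by (simp add: C_def Fk_simplex_barycenter)
  moreover have "y \<in> K" if "y \<in> open_simplex (dim_d k)" "Fk k y \<le> C" for y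
    unfolding K_def using that(1) \<open>1 \<le> C\<close> that(2) by (rule Fk_sublevel_subset_truncated_simplex)
  ultimately obtain x where "x \<in> open_simplex (dim_d k)"
      "Fk k x = (INF y\<in>open_simplex (dim_d k). Fk k y)" "Fk k x \<le> C"
    using INF_attained_of_compact_sublevel[OF _ KP _ bary] by metis
  then show ?thesis using one_le_Fk unfolding C_def by metis
qed

end
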